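(* Let $X$ be the ARH(1) process described in the context, with $k_n$ a truncation parameter ($k_n\to\infty$, $k_n/n<1$) such that, for some $\beta>1/2$, $\sqrt{k_n}\,\Lambda_{k_n}=o\left(n^{1/4}/(\ln(n))^{\beta}\right)$. Assume Assumptions A1, A2, A3 and A4 hold and that $\rho$ is a trace operator. Suppose $M_n$ is a sequence with $\|\mathcal{D}_n\mathcal{C}_n^{-1}-D_XC_X^{-1}\|_{\mathcal{L}(H)}=\mathcal{O}(M_n)$ almost surely, and $\Lambda^{\rho}_{k_n}=o(1/M_n)$ as $n\to\infty$. Then, as $n\to\infty$, $$\sup_{1\le j\le k_n}\|\psi_{n,j}-\psi'_{n,j}\|_H\to0\ \text{a.s.},\qquad \sup_{1\le j\le k_n}\|\widetilde{\psi}_{n,j}-\widetilde{\psi}'_{n,j}\|_H\to0\ \text{a.s.},$$ where $\psi'_{n,j}=\mathrm{sgn}\langle\psi_{n,j},\psi_j\rangle_H\,\psi_j$ and $\widetilde{\psi}'_{n,j}=\mathrm{sgn}\langle\widetilde\psi_{n,j},\widetilde\psi_j\rangle_H\,\widetilde\psi_j$, with $\mathrm{sgn}(a)=\mathbf{1}_{a\ge0}-\mathbf{1}_{a<0}$.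
   Context: $H$ is a real separable Hilbert space and $\mathcal{L}(H)$ is the space of bounded linear operators on $H$ with the operator norm. $X=\{X_n,\ n\in\mathbb{Z}\}$ is a zero-mean ARH(1) process: $X_n=\rho(X_{n-1})+\varepsilon_n$, where $\rho\in\mathcal{L}(H)$ satisfies $\|\rho^k\|_{\mathcal{L}(H)}<1$ for all $k\ge k_0$, for some $k_0$; $\varepsilon$ is an $H$-valued strong white noise uncorrelated with the initial condition, and $X$ is the unique stationary solution. For $x,y\in H$, $(x\otimes y)(f)=\langle x,f\rangle_H\, y$. $C_X=\mathrm{E}[X_0\otimes X_0]$ has eigenvalues $C_1\ge C_2\ge\dots$ with orthonormal eigenvectors $\phi_j$; $D_X=\mathrm{E}[X_0\otimes X_1]$, and $\rho=D_XC_X^{-1}$. $\mathcal{C}_n=\frac1n\sum_{i=0}^{n-1}X_i\otimes X_i$ has eigenvalues $C_{n,1}\ge\dots\ge C_{n,n}\ge0=C_{n,n+1}=\dots$ with orthonormal eigenvectors $\phi_{n,j}$; $\mathcal{C}_n^{-1}=\sum_{j:\,C_{n,j}>0}C_{n,j}^{-1}\phi_{n,j}\otimes\phi_{n,j}$. $\mathcal{D}_n=\frac{1}{n-1}\sum_{i=0}^{n-2}X_i\otimes X_{i+1}$. $\Lambda_{k_n}=\sup_{1\le j\le k_n}(C_j-C_{j+1})^{-1}$. Assumption A1: $\|X_0\|_H<M$ a.s. Assumption A2: $C_{n,k_n}>0$ a.s. Assumption A3: $C_j>0$ for all $j$, $D_X$ is nuclear, and $\rho$ is compact. Under A3, $\rho$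 has the singular value decomposition $\rho(x)=\sum_{j\ge1}\rho_j\langle x,\psi_j\rangle_H\widetilde\psi_j$, with $\rho(\psi_j)=\rho_j\widetilde\psi_j$, orthonormal right singular vectors $\psi_j$, orthonormal left singular vectors $\widetilde\psi_j$, and $|\rho_1|\ge|\rho_2|\ge\dots$. The compact operator $\mathcal{D}_n\mathcal{C}_n^{-1}$ (for $n$ large) has singular value decomposition $\mathcal{D}_n\mathcal{C}_n^{-1}(h)=\sum_{j=1}^{n}\widehat\rho_{n,j}\langle h,\psi_{n,j}\rangle_H\widetilde\psi_{n,j}$, with $\mathcal{D}_n\mathcal{C}_n^{-1}(\psi_{n,j})=\widehat\rho_{n,j}\widetilde\psi_{n,j}$ and orthonormal families $\{\psi_{n,j}\}$, $\{\widetilde\psi_{n,j}\}$. $\Lambda^{\rho}_{k_n}=\sup_{1\le j\le k_n}(|\rho_j|^2-|\rho_{j+1}|^2)^{-1}$ (assumed finite). Assumption A4: $\sup_{j\ge1}|\rho_j|+\sup_{j\ge1}|\widehat\rho_{n,j}|\le 1$. *)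

theory Defs
  imports "HOL-Probability.Probability" "HOL-Library.Landau_Symbols"
begin

definition tens :: "'a::real_inner \<Rightarrow> 'a \<Rightarrow> 'a \<Rightarrow> 'a" where
  "tens x y = (\<lambda>f. inner x f *\<^sub>R y)"

definition sgn01 :: "real \<Rightarrow> real" where
  "sgn01 a = (if a \<ge> 0 then 1 else -1)"

definition compact_op :: "('a::real_normed_vector \<Rightarrow> 'a) \<Rightarrow> bool" where
  "compact_op T \<longleftrightarrow> bounded_linear T \<and> compact (closure (T ` ball 0 1))"

text \<open>Nuclear (= trace class on a Hilbert space) operator.\<close>
definition nuclear_op :: "('a::real_inner \<Rightarrow> 'a) \<Rightarrow> bool" where
  "nuclear_op T \<longleftrightarrow> bounded_linear T \<and>
     (\<exists>a b :: nat \<Rightarrow> 'a. summable (\<lambda>j. norm (a j) * norm (b j)) \<and>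
        (\<forall>x. (\<lambda>j. tens (a j) (b j) x) sums T x))"

definition orthonormal_on :: "nat set \<Rightarrow> (nat \<Rightarrow> 'a::real_inner) \<Rightarrow> bool" where
  "orthonormal_on J e \<longleftrightarrow> (\<forall>i\<in>J. \<forall>j\<in>J. inner (e i) (e j) = (if i = j then 1 else 0))"

definition op_expect :: "'w measure \<Rightarrow> ('w \<Rightarrow> 'a \<Rightarrow> 'a::{banach,second_countable_topology}) \<Rightarrow> 'a \<Rightarrow> 'a" where
  "op_expect M T = (\<lambda>f. integral\<^sup>L M (\<lambda>\<omega>. T \<omega> f))"

definition emp_C :: "(int \<Rightarrow> 'w \<Rightarrow> 'a::real_inner) \<Rightarrow> nat \<Rightarrow> 'w \<Rightarrow> 'a \<Rightarrow> 'a" where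
  "emp_C X n \<omega> = (\<lambda>f. (1 / real n) *\<^sub>R (\<Sum>i<n. tens (X (int i) \<omega>) (X (int i) \<omega>) f))"

definition emp_D :: "(int \<Rightarrow> 'w \<Rightarrow> 'a::real_inner) \<Rightarrow> nat \<Rightarrow> 'w \<Rightarrow> 'a \<Rightarrow> 'a" where
  "emp_D X n \<omega> = (\<lambda>f. (1 / (real n - 1)) *\<^sub>R
       (\<Sum>i<n - 1. tens (X (int i) \<omega>) (X (int i + 1) \<omega>) f))"

text \<open>Pseudo-inverse C_n^{-1} built from an eigen-decomposition (values c, vectors e) of C_n.\<close>
definition emp_Cinv :: "(nat \<Rightarrow> real) \<Rightarrow> (nat \<Rightarrow> 'a::real_inner) \<Rightarrow> nat \<Rightarrow> 'a \<Rightarrow> 'a" where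
  "emp_Cinv c e n = (\<lambda>h. \<Sum>j\<in>{j\<in>{1..n}. c j > 0}. (1 / c j) *\<^sub>R tens (e j) (e j) h)"

definition Lambda_gap :: "(nat \<Rightarrow> real) \<Rightarrow> nat \<Rightarrow> real" where
  "Lambda_gap c k = Max ((\<lambda>j. 1 / (c j - c (Suc j))) ` {1..k})"

end

theory Submission
  imports Defs
begin

(* The statement is pathwise: of the probabilistic hypotheses only the almost sure
   rate M_n is used. Fix an outcome and write R = rho and T = D_n C_n^{-1}, both given by singular
   value decompositions with singular values bounded by 1 (A4), and e = ||T - R||. A min-max
   argument shows that the squared singular values of R and T differ by at most 2e. For the j-th
   right singular vector u of T, the form <R u, R h> - sigma_j^2 <u, h> is bounded by 2e ||h||;
   evaluated on the components of u along the right singular vectors of R before and after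
   index j, the gap g between consecutive squared singular values of R bounds each of these
   components by 2e/(g - 2e), whence ||u - sgn<u,p_j> p_j|| <= 4e/(g - 2e). Left singular
   vectors are right singular vectors of the adjoints. For j <= k_n one may take g = 1/Lambda^rho,
   and e Lambda^rho -> 0 since e = O(M_n) and Lambda^rho = o(1/M_n). *)

section \<open>Orthonormal families\<close>

lemma tens_apply: "tens a b x = inner a x *\<^sub>R b"
  by (simp add: tens_def)

lemma orthonormal_onD:
  "orthonormal_on J e \<Longrightarrow> i \<in> J \<Longrightarrow> l \<in> J \<Longrightarrow> inner (e i) (e l) = (if i = l then 1 else 0)"
  unfolding orthonormal_on_def by blast

lemma orthonormal_on_Suc: "orthonormal_on {1..} e \<Longrightarrow> orthonormal_on UNIV (\<lambda>i. e (Suc i))"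
  unfolding orthonormal_on_def by simp

lemma inner_orthonormal_combination:
  assumes e: "orthonormal_on J e" and I: "finite I" "I \<subseteq> J" and l: "l \<in> J"
  shows "inner (e l) (\<Sum>i\<in>I. c i *\<^sub>R e i) = (if l \<in> I then c l else 0)"
proof -
  have "inner (e l) (\<Sum>i\<in>I. c i *\<^sub>R e i) = (\<Sum>i\<in>I. c i * inner (e l) (e i))"
    by (simp add: inner_sum_right)
  also have "\<dots> = (\<Sum>i\<in>I. if l = i then c i else 0)"
    using I l by (intro sum.cong refl) (auto simp: orthonormal_onD[OF e])
  finally show ?thesis
    using I by simp
qed

lemma norm_orthonormal_combination:
  assumes e: "orthonormal_on J e" and I: "finite I" "I \<subseteq> J"
  shows "(norm (\<Sum>i\<in>I. c i *\<^sub>R e i))\<^sup>2 = (\<Sum>i\<in>I. (c i)\<^sup>2)"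
proof -
  have "(norm (\<Sum>i\<in>I. c i *\<^sub>R e i))\<^sup>2 = (\<Sum>l\<in>I. c l * inner (e l) (\<Sum>i\<in>I. c i *\<^sub>R e i))"
    by (simp add: power2_norm_eq_inner inner_sum_left)
  also have "\<dots> = (\<Sum>l\<in>I. (c l)\<^sup>2)"
    using I by (intro sum.cong) (auto simp: inner_orthonormal_combination[OF e I] power2_eq_square)
  finally show ?thesis .
qed

lemma orthonormal_residual_orthogonal:
  assumes e: "orthonormal_on J e" and I: "finite I" "I \<subseteq> J" and l: "l \<in> I"
  shows "inner (e l) (x - (\<Sum>i\<in>I. inner (e i) x *\<^sub>R e i)) = 0"
  using inner_orthonormal_combination[OF e I, of l "\<lambda>i. inner (e i) x"] I l
  by (auto simp: inner_diff_right)

lemma orthonormal_pythagoras: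
  assumes e: "orthonormal_on J e" and I: "finite I" "I \<subseteq> J"
  shows "(norm x)\<^sup>2 = (\<Sum>i\<in>I. (inner (e i) x)\<^sup>2) + (norm (x - (\<Sum>i\<in>I. inner (e i) x *\<^sub>R e i)))\<^sup>2"
proof -
  define P where "P = (\<Sum>i\<in>I. inner (e i) x *\<^sub>R e i)"
  have "inner P (x - P) = 0"
    unfolding P_def inner_sum_left
    using orthonormal_residual_orthogonal[OF e I] by (simp add: P_def)
  then have "(norm (P + (x - P)))\<^sup>2 = (norm P)\<^sup>2 + (norm (x - P))\<^sup>2"
    by (intro norm_add_Pythagorean) (simp add: orthogonal_def)
  then show ?thesis
    by (simp add: norm_orthonormal_combination[OF e I] P_def)
qed

lemma bessel_inequality:
  assumes "orthonormal_on J e" "finite I" "I \<subseteq> J"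
  shows "(\<Sum>i\<in>I. (inner (e i) x)\<^sup>2) \<le> (norm x)\<^sup>2"
  using orthonormal_pythagoras[OF assms, of x] by simp

lemma bessel_series:
  assumes e: "orthonormal_on {1..} e"
  shows "summable (\<lambda>i. (inner (e (Suc i)) x)\<^sup>2)" "(\<Sum>i. (inner (e (Suc i)) x)\<^sup>2) \<le> (norm x)\<^sup>2"
proof -
  have partial: "(\<Sum>i<N. (inner (e (Suc i)) x)\<^sup>2) \<le> (norm x)\<^sup>2" for N
    using bessel_inequality[OF orthonormal_on_Suc[OF e], of "{..<N}" x] by simp
  show "summable (\<lambda>i. (inner (e (Suc i)) x)\<^sup>2)"
    by (rule summableI_nonneg_bounded[where x="(norm x)\<^sup>2"]) (use partial in auto)
  then show "(\<Sum>i. (inner (e (Suc i)) x)\<^sup>2) \<le> (norm x)\<^sup>2"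
    using partial by (intro suminf_le_const) auto
qed

lemma summable_orthonormal_combination:
  fixes e :: "nat \<Rightarrow> 'a::{real_inner,banach}"
  assumes e: "orthonormal_on UNIV e" and c: "summable (\<lambda>i. (c i)\<^sup>2)"
  shows "summable (\<lambda>i. c i *\<^sub>R e i)"
  unfolding summable_Cauchy
proof (intro allI impI)
  fix r :: real
  assume "r > 0"
  then have "r\<^sup>2 > 0"
    by simp
  then obtain N where N: "\<And>m n. m \<ge> N \<Longrightarrow> norm (\<Sum>i = m..<n. (c i)\<^sup>2) < r\<^sup>2"
    using c unfolding summable_Cauchy by blast
  have "norm (\<Sum>i = m..<n. c i *\<^sub>R e i) < r" if "m \<ge> N" for m n
  proof -
    have "(norm (\<Sum>i = m..<n. c i *\<^sub>R e i))\<^sup>2 = (\<Sum>i = m..<n. (c i)\<^sup>2)"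
      by (rule norm_orthonormal_combination[OF e]) auto
    also have "\<dots> < r\<^sup>2"
      using N[OF that, of n] by simp
    finally show ?thesis
      by (rule power_less_imp_less_base) (use \<open>r > 0\<close> in simp)
  qed
  then show "\<exists>N. \<forall>m\<ge>N. \<forall>n. norm (\<Sum>i = m..<n. c i *\<^sub>R e i) < r"
    by blast
qed

lemma parseval_orthonormal_combination:
  assumes e: "orthonormal_on {1..} e" and I: "finite I" "I \<subseteq> {1..}"
  shows "(\<lambda>i. (inner (e (Suc i)) (\<Sum>l\<in>I. d l *\<^sub>R e l))\<^sup>2) sums (\<Sum>l\<in>I. (d l)\<^sup>2)"
proof -
  have "(\<lambda>i. (inner (e (Suc i)) (\<Sum>l\<in>I. d l *\<^sub>R e l))\<^sup>2)
      = (\<lambda>i. if i \<in> Suc -` I then (d (Suc i))\<^sup>2 else 0)"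
    using inner_orthonormal_combination[OF e I] by auto
  moreover have "(\<Sum>i\<in>Suc -` I. (d (Suc i))\<^sup>2) = (\<Sum>l\<in>I. (d l)\<^sup>2)"
  proof -
    have "x = Suc (x - 1)" if "x \<in> I" for x
      using I(2) that by auto
    then have image: "Suc ` (Suc -` I) = I"
      by (auto simp: image_vimage_eq)
    show ?thesis
      by (rule sym, rule sum.reindex_cong[where l=Suc]) (use image in auto)
  qed
  ultimately show ?thesis
    using sums_If_finite_set[OF finite_vimageI[OF I(1) inj_Suc]] by metis
qed

section \<open>Homogeneous linear systems\<close>

lemma homogeneous_system_nontrivial_solution:
  fixes A :: "'l \<Rightarrow> 'i \<Rightarrow> real"
  assumes "finite L" "finite J" "card L < card J"
  shows "\<exists>d. (\<exists>i\<in>J. d i \<noteq> 0) \<and> (\<forall>l\<in>L. (\<Sum>i\<in>J. A l i * d i) = 0)"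
  using assms
proof (induction L arbitrary: J A rule: finite_induct)
  case empty
  then obtain i where "i \<in> J"
    by fastforce
  then show ?case
    by (intro exI[of _ "\<lambda>_. 1"]) auto
next
  case (insert l0 L)
  show ?case
  proof (cases "\<forall>i\<in>J. A l0 i = 0")
    case True
    with insert obtain d where "\<exists>i\<in>J. d i \<noteq> 0" "\<forall>l\<in>L. (\<Sum>i\<in>J. A l i * d i) = 0"
      by (metis Suc_lessD card_insert_disjoint)
    with True show ?thesis
      by (intro exI[of _ d]) auto
  next
    case False
    then obtain i0 where i0: "i0 \<in> J" "A l0 i0 \<noteq> 0"
      by auto
    \<comment> \<open>Gaussian elimination of the unknown \<open>i0\<close> with the equation \<open>l0\<close>.\<close>
    define J' where "J' = J - {i0}"
    define A' where "A' l i = A l i - A l0 i / A l0 i0 * A l i0" for l i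
    have "card L < card J'"
      using insert i0 by (simp add: J'_def)
    with insert.IH[of J' A'] insert.prems obtain d' where
      d': "\<exists>i\<in>J'. d' i \<noteq> 0" "\<forall>l\<in>L. (\<Sum>i\<in>J'. A' l i * d' i) = 0"
      by (auto simp: J'_def)
    define d where "d i = (if i = i0 then - (\<Sum>i\<in>J'. A l0 i * d' i) / A l0 i0 else d' i)" for i
    have split: "(\<Sum>i\<in>J. A l i * d i) = A l i0 * d i0 + (\<Sum>i\<in>J'. A l i * d' i)" for l
      using i0 insert.prems by (simp add: J'_def sum.remove d_def)
    have eliminated: "(\<Sum>i\<in>J'. A' l i * d' i) = A l i0 * d i0 + (\<Sum>i\<in>J'. A l i * d' i)" for l
      using i0 by (simp add: A'_def d_def algebra_simps sum_subtractf sum_distrib_left sum_divide_distrib)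
    have "A l0 i0 * d i0 = - (\<Sum>i\<in>J'. A l0 i * d' i)"
      using i0(2) by (simp add: d_def)
    then have "(\<Sum>i\<in>J. A l0 i * d i) = 0"
      by (simp add: split)
    moreover have "\<forall>l\<in>L. (\<Sum>i\<in>J. A l i * d i) = 0"
      using d'(2) by (simp add: split eliminated[symmetric])
    moreover have "\<exists>i\<in>J. d i \<noteq> 0"
      using d'(1) by (auto simp: J'_def d_def)
    ultimately show ?thesis
      by blast
  qed
qed

lemma exists_unit_combination_orthogonal:
  fixes e f :: "'l \<Rightarrow> 'a::real_inner"
  assumes "finite L" "finite J" "card L < card J"
  obtains d where "(\<Sum>i\<in>J. (d i)\<^sup>2) = 1" "\<And>l. l \<in> L \<Longrightarrow> inner (f l) (\<Sum>i\<in>J. d i *\<^sub>R e i) = 0"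
proof -
  obtain d0 where nonzero: "\<exists>i\<in>J. d0 i \<noteq> 0"
    and orth: "\<forall>l\<in>L. (\<Sum>i\<in>J. inner (f l) (e i) * d0 i) = 0"
    using homogeneous_system_nontrivial_solution[OF assms, of "\<lambda>l i. inner (f l) (e i)"] by blast
  define N where "N = (\<Sum>i\<in>J. (d0 i)\<^sup>2)"
  have "N > 0"
  proof -
    from nonzero obtain i where "i \<in> J" "d0 i \<noteq> 0"
      by blast
    then show ?thesis
      unfolding N_def using assms(2) by (intro sum_pos2[of J i]) auto
  qed
  show ?thesis
  proof
    show "(\<Sum>i\<in>J. (d0 i / sqrt N)\<^sup>2) = 1"
      using \<open>N > 0\<close> by (simp add: power_divide sum_divide_distrib[symmetric] N_def)
    show "inner (f l) (\<Sum>i\<in>J. (d0 i / sqrt N) *\<^sub>R e i) = 0" if "l \<in> L" for l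
      using orth that by (simp add: inner_sum_right sum_divide_distrib[symmetric] mult.commute)
  qed
qed

section \<open>Operators given by singular value decompositions\<close>

locale svd_series =
  fixes R :: "'a::real_inner \<Rightarrow> 'a" and p q :: "nat \<Rightarrow> 'a" and s :: "nat \<Rightarrow> real"
  assumes p_orthonormal: "orthonormal_on {1..} p"
    and q_orthonormal: "orthonormal_on {1..} q"
    and sums_image: "\<And>x. (\<lambda>i. s (Suc i) *\<^sub>R tens (p (Suc i)) (q (Suc i)) x) sums R x"
begin

lemma inner_image_left_vector:
  assumes "l \<ge> 1"
  shows "inner (R x) (q l) = s l * inner (p l) x"
proof -
  have "(\<lambda>i. inner (s (Suc i) *\<^sub>R tens (p (Suc i)) (q (Suc i)) x) (q l)) sums inner (R x) (q l)"
    by (rule bounded_linear.sums[OF bounded_linear_inner_left sums_image])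
  moreover have "(\<lambda>i. inner (s (Suc i) *\<^sub>R tens (p (Suc i)) (q (Suc i)) x) (q l))
      = (\<lambda>i. if i = l - 1 then s l * inner (p l) x else 0)"
    using assms by (intro ext) (auto simp: tens_apply orthonormal_onD[OF q_orthonormal])
  ultimately show ?thesis
    using sums_single[of "l - 1" "\<lambda>_. s l * inner (p l) x"] sums_unique2 by metis
qed

lemma inner_image_sums:
  "(\<lambda>i. (s (Suc i))\<^sup>2 * inner (p (Suc i)) x * inner (p (Suc i)) y) sums inner (R x) (R y)"
proof -
  have "(\<lambda>i. inner (s (Suc i) *\<^sub>R tens (p (Suc i)) (q (Suc i)) x) (R y)) sums inner (R x) (R y)"
    by (rule bounded_linear.sums[OF bounded_linear_inner_left sums_image])
  then show ?thesis
    by (simp add: tens_apply inner_commute[of _ "R y"] inner_image_left_vector power2_eq_square ac_simps)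
qed

lemma norm_image_sums: "(\<lambda>i. (s (Suc i))\<^sup>2 * (inner (p (Suc i)) x)\<^sup>2) sums (norm (R x))\<^sup>2"
  using inner_image_sums[of x x] unfolding power2_norm_eq_inner[of "R x"] by (simp add: power2_eq_square mult.assoc)

lemma inner_image_eq_of_coefficients:
  assumes "\<And>i. i \<ge> 1 \<Longrightarrow> inner (p i) x * inner (p i) y = inner (p i) x' * inner (p i) y'"
  shows "inner (R x) (R y) = inner (R x') (R y')"
proof -
  have coefficients: "(s (Suc i))\<^sup>2 * inner (p (Suc i)) x * inner (p (Suc i)) y
      = (s (Suc i))\<^sup>2 * inner (p (Suc i)) x' * inner (p (Suc i)) y'" for i
    using assms[of "Suc i"] by (simp add: mult.assoc)
  have "(\<lambda>i. (s (Suc i))\<^sup>2 * inner (p (Suc i)) x * inner (p (Suc i)) y) sums inner (R x') (R y')"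
    using inner_image_sums[of x' y'] by (simp only: coefficients)
  then show ?thesis
    using inner_image_sums[of x y] sums_unique2 by blast
qed

lemma norm_image_squared_le:
  assumes "0 \<le> c" and c: "\<And>i. i \<ge> 1 \<Longrightarrow> inner (p i) h \<noteq> 0 \<Longrightarrow> (s i)\<^sup>2 \<le> c"
  shows "(norm (R h))\<^sup>2 \<le> c * (norm h)\<^sup>2"
proof -
  note bessel = bessel_series[OF p_orthonormal, of h]
  have "(s (Suc i))\<^sup>2 * (inner (p (Suc i)) h)\<^sup>2 \<le> c * (inner (p (Suc i)) h)\<^sup>2" for i
    using c[of "Suc i"] by (cases "inner (p (Suc i)) h = 0") (auto intro: mult_right_mono)
  then have "(norm (R h))\<^sup>2 \<le> (\<Sum>i. c * (inner (p (Suc i)) h)\<^sup>2)"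
    by (rule sums_le[OF _ norm_image_sums summable_sums[OF summable_mult[OF bessel(1)]]])
  also have "\<dots> \<le> c * (norm h)\<^sup>2"
    using bessel \<open>0 \<le> c\<close> by (simp add: suminf_mult mult_left_mono)
  finally show ?thesis .
qed

lemma norm_image_squared_ge:
  assumes I: "finite I" "I \<subseteq> {1..}" and h: "h = (\<Sum>i\<in>I. d i *\<^sub>R p i)"
    and c: "\<And>i. i \<in> I \<Longrightarrow> c \<le> (s i)\<^sup>2"
  shows "c * (norm h)\<^sup>2 \<le> (norm (R h))\<^sup>2"
proof -
  have coefficient: "inner (p i) h = (if i \<in> I then d i else 0)" if "i \<ge> 1" for i
    unfolding h using inner_orthonormal_combination[OF p_orthonormal I] that by simp
  have parseval: "(\<lambda>i. c * (inner (p (Suc i)) h)\<^sup>2) sums (c * (norm h)\<^sup>2)"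
    unfolding h norm_orthonormal_combination[OF p_orthonormal I]
    by (intro sums_mult parseval_orthonormal_combination[OF p_orthonormal I])
  have "c * (inner (p (Suc i)) h)\<^sup>2 \<le> (s (Suc i))\<^sup>2 * (inner (p (Suc i)) h)\<^sup>2" for i
    using c[of "Suc i"] coefficient[of "Suc i"] by (cases "Suc i \<in> I") (simp_all add: mult_right_mono)
  then show ?thesis
    using parseval norm_image_sums by (rule sums_le)
qed

lemma norm_image_le:
  assumes "\<And>i. i \<ge> 1 \<Longrightarrow> \<bar>s i\<bar> \<le> 1"
  shows "norm (R x) \<le> norm x"
proof -
  have "(norm (R x))\<^sup>2 \<le> 1 * (norm x)\<^sup>2"
    using abs_square_le_1[THEN iffD2, OF assms] by (intro norm_image_squared_le[OF zero_le_one]) blast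
  then show ?thesis
    by (metis mult_1 norm_ge_zero power2_le_imp_le)
qed

end

lemma svd_series_adjoint:
  fixes R :: "'a::{real_inner,banach} \<Rightarrow> 'a"
  assumes R: "svd_series R p q s" and s_le_1: "\<And>i. i \<ge> 1 \<Longrightarrow> \<bar>s i\<bar> \<le> 1"
  obtains R' where "svd_series R' q p s" "\<And>x y. inner (R' x) y = inner x (R y)"
proof -
  interpret svd_series R p q s
    by (rule R)
  define R' where "R' x = (\<Sum>i. s (Suc i) *\<^sub>R tens (q (Suc i)) (p (Suc i)) x)" for x
  have summable: "summable (\<lambda>i. s (Suc i) *\<^sub>R tens (q (Suc i)) (p (Suc i)) x)" for x
  proof -
    have "summable (\<lambda>i. (s (Suc i) * inner (q (Suc i)) x)\<^sup>2)"
      by (rule summable_comparison_test'[OF bessel_series(1)[OF q_orthonormal, of x]])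
        (simp add: power_mult_distrib abs_square_le_1 mult_left_le_one_le s_le_1)
    then show ?thesis
      using summable_orthonormal_combination[OF orthonormal_on_Suc[OF p_orthonormal]]
      by (simp add: tens_apply)
  qed
  show ?thesis
  proof
    show sums': "svd_series R' q p s"
      by unfold_locales (use p_orthonormal q_orthonormal summable in \<open>auto simp: R'_def summable_sums\<close>)
    show "inner (R' x) y = inner x (R y)" for x y
    proof -
      have "(\<lambda>i. inner (s (Suc i) *\<^sub>R tens (q (Suc i)) (p (Suc i)) x) y) sums inner (R' x) y"
        by (rule bounded_linear.sums[OF bounded_linear_inner_left svd_series.sums_image[OF sums']])
      moreover have "(\<lambda>i. inner x (s (Suc i) *\<^sub>R tens (p (Suc i)) (q (Suc i)) y)) sums inner x (R y)"
        by (rule bounded_linear.sums[OF bounded_linear_inner_right sums_image])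
      moreover have "(\<lambda>i. inner (s (Suc i) *\<^sub>R tens (q (Suc i)) (p (Suc i)) x) y)
          = (\<lambda>i. inner x (s (Suc i) *\<^sub>R tens (p (Suc i)) (q (Suc i)) y))"
        by (simp add: tens_apply inner_commute mult_ac)
      ultimately show ?thesis
        by (metis sums_unique2)
    qed
  qed
qed

locale svd_sum =
  fixes T :: "'a::real_inner \<Rightarrow> 'a" and u v :: "nat \<Rightarrow> 'a" and \<sigma> :: "nat \<Rightarrow> real" and n :: nat
  assumes u_orthonormal: "orthonormal_on {1..n} u"
    and v_orthonormal: "orthonormal_on {1..n} v"
    and image_eq: "\<And>x. T x = (\<Sum>l=1..n. \<sigma> l *\<^sub>R tens (u l) (v l) x)"
begin

lemma bounded_linear_image: "bounded_linear T"
proof -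
  have "T = (\<lambda>x. \<Sum>l=1..n. \<sigma> l *\<^sub>R tens (u l) (v l) x)"
    using image_eq by blast
  then show ?thesis
    by (simp add: tens_def bounded_linear_intros)
qed

lemma norm_vector: "l \<in> {1..n} \<Longrightarrow> norm (u l) = 1"
  using orthonormal_onD[OF u_orthonormal] by (simp add: norm_eq_sqrt_inner)

lemma inner_image:
  "inner (T x) (T y) = (\<Sum>l=1..n. (\<sigma> l)\<^sup>2 * inner (u l) x * inner (u l) y)"
proof -
  have image: "T z = (\<Sum>l\<in>{1..n}. (\<sigma> l * inner (u l) z) *\<^sub>R v l)" for z
    by (simp add: image_eq tens_apply)
  have "inner (T x) (T y) = (\<Sum>l\<in>{1..n}. (\<sigma> l * inner (u l) y) * inner (v l) (T x))"
    by (simp add: image[of y] inner_sum_right inner_commute)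
  also have "\<dots> = (\<Sum>l=1..n. (\<sigma> l)\<^sup>2 * inner (u l) x * inner (u l) y)"
    by (intro sum.cong refl)
      (simp add: image[of x] inner_orthonormal_combination[OF v_orthonormal] power2_eq_square)
  finally show ?thesis .
qed

lemma inner_image_vector:
  assumes "j \<in> {1..n}"
  shows "inner (T (u j)) (T y) = (\<sigma> j)\<^sup>2 * inner (u j) y"
proof -
  have "inner (T (u j)) (T y) = (\<Sum>l\<in>{1..n}. if l = j then (\<sigma> j)\<^sup>2 * inner (u j) y else 0)"
    unfolding inner_image using assms by (intro sum.cong refl) (auto simp: orthonormal_onD[OF u_orthonormal])
  then show ?thesis
    using assms by simp
qed

lemma norm_image_squared_le:
  assumes "0 \<le> c" and c: "\<And>l. l \<in> {1..n} \<Longrightarrow> inner (u l) h \<noteq> 0 \<Longrightarrow> (\<sigma> l)\<^sup>2 \<le> c"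
  shows "(norm (T h))\<^sup>2 \<le> c * (norm h)\<^sup>2"
proof -
  have "(norm (T h))\<^sup>2 \<le> (\<Sum>l=1..n. c * (inner (u l) h)\<^sup>2)"
    unfolding power2_norm_eq_inner[of "T h"] inner_image
    using c by (intro sum_mono) (metis mult.assoc mult_right_mono mult_zero_right power2_eq_square zero_le_square)
  also have "\<dots> \<le> c * (norm h)\<^sup>2"
    using bessel_inequality[OF u_orthonormal, of "{1..n}" h] \<open>0 \<le> c\<close>
    by (simp add: sum_distrib_left[symmetric] mult_left_mono)
  finally show ?thesis .
qed

lemma norm_image_squared_ge:
  assumes I: "I \<subseteq> {1..n}" and h: "h = (\<Sum>l\<in>I. d l *\<^sub>R u l)" and c: "\<And>l. l \<in> I \<Longrightarrow> c \<le> (\<sigma> l)\<^sup>2"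
  shows "c * (norm h)\<^sup>2 \<le> (norm (T h))\<^sup>2"
proof -
  have fin: "finite I"
    using I finite_subset by blast
  have coefficient: "inner (u l) h = (if l \<in> I then d l else 0)" if "l \<in> {1..n}" for l
    unfolding h using inner_orthonormal_combination[OF u_orthonormal fin I that] by simp
  have "c * (norm h)\<^sup>2 = (\<Sum>l\<in>I. c * (d l)\<^sup>2)"
    unfolding h norm_orthonormal_combination[OF u_orthonormal fin I] by (simp add: sum_distrib_left)
  also have "\<dots> \<le> (\<Sum>l\<in>I. (\<sigma> l)\<^sup>2 * (d l)\<^sup>2)"
    using c by (intro sum_mono mult_right_mono) auto
  also have "\<dots> = (\<Sum>l=1..n. (\<sigma> l)\<^sup>2 * inner (u l) h * inner (u l) h)"
    using I by (intro sum.mono_neutral_cong_left) (auto simp: coefficient power2_eq_square)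
  also have "\<dots> = (norm (T h))\<^sup>2"
    by (simp add: power2_norm_eq_inner inner_image)
  finally show ?thesis .
qed

lemma norm_image_le:
  assumes "\<And>l. l \<in> {1..n} \<Longrightarrow> \<bar>\<sigma> l\<bar> \<le> 1"
  shows "norm (T x) \<le> norm x"
proof -
  have "(norm (T x))\<^sup>2 \<le> 1 * (norm x)\<^sup>2"
    using abs_square_le_1[THEN iffD2, OF assms] by (intro norm_image_squared_le[OF zero_le_one]) blast
  then show ?thesis
    by (metis mult_1 norm_ge_zero power2_le_imp_le)
qed

lemma adjoint: "svd_sum (\<lambda>x. \<Sum>l=1..n. \<sigma> l *\<^sub>R tens (v l) (u l) x) v u \<sigma> n"
  by unfold_locales (fact v_orthonormal, fact u_orthonormal, rule refl)

lemma inner_adjoint: "inner (\<Sum>l=1..n. \<sigma> l *\<^sub>R tens (v l) (u l) x) y = inner x (T y)"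
  unfolding image_eq tens_apply inner_sum_left inner_sum_right
  by (intro sum.cong refl) (simp add: inner_commute)

end

section \<open>Perturbation of singular values and singular vectors\<close>

lemma inner_images_diff_le:
  fixes R T :: "'a::real_inner \<Rightarrow> 'a"
  assumes close: "\<And>x. norm (R x - T x) \<le> e * norm x"
    and R: "\<And>x. norm (R x) \<le> norm x" and T: "\<And>x. norm (T x) \<le> norm x"
  shows "\<bar>inner (R x) (R y) - inner (T x) (T y)\<bar> \<le> 2 * e * norm x * norm y"
proof -
  have "inner (R x) (R y) - inner (T x) (T y) = inner (R x - T x) (R y) + inner (T x) (R y - T y)"
    by (simp add: inner_diff_left inner_diff_right)
  also have "\<bar>\<dots>\<bar> \<le> norm (R x - T x) * norm (R y) + norm (T x) * norm (R y - T y)"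
    by (intro order.trans[OF abs_triangle_ineq] add_mono Cauchy_Schwarz_ineq2)
  also have "\<dots> \<le> (e * norm x) * norm y + norm x * (e * norm y)"
    by (intro add_mono mult_mono close R T) (auto intro: order.trans[OF norm_ge_zero close])
  finally show ?thesis
    by (simp add: algebra_simps)
qed

lemma adjoint_diff_le:
  fixes R T R' T' :: "'a::real_inner \<Rightarrow> 'a"
  assumes R': "\<And>x y. inner (R' x) y = inner x (R y)" and T': "\<And>x y. inner (T' x) y = inner x (T y)"
    and close: "\<And>x. norm (R x - T x) \<le> e * norm x"
  shows "norm (R' x - T' x) \<le> e * norm x"
proof (cases "R' x = T' x")
  case True
  then show ?thesis
    using order.trans[OF norm_ge_zero close[of x]] by simp
next
  case False
  define z where "z = R' x - T' x"
  have "norm z * norm z = inner (R' x) z - inner (T' x) z"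
    by (simp add: z_def inner_diff_left flip: dot_square_norm power2_eq_square)
  also have "\<dots> = inner x (R z - T z)"
    by (simp add: R' T' inner_diff_right)
  also have "\<dots> \<le> (e * norm x) * norm z"
    using norm_cauchy_schwarz[of x "R z - T z"] mult_left_mono[OF close[of z] norm_ge_zero[of x]]
    by (simp add: ac_simps)
  finally show ?thesis
    using False by (simp add: z_def)
qed

lemma le_divide_of_mult_square_le:
  fixes x m \<delta> :: real
  assumes "0 \<le> x" "0 < m" "0 \<le> \<delta>" "m * x\<^sup>2 \<le> \<delta> * x"
  shows "x \<le> \<delta> / m"
proof (cases "x = 0")
  case True
  then show ?thesis
    using assms by simp
next
  case False
  have "(m * x) * x \<le> \<delta> * x"
    using assms(4) by (simp add: power2_eq_square mult.assoc)
  then have "m * x \<le> \<delta>"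
    by (rule mult_right_le_imp_le) (use False assms(1) in simp)
  then show ?thesis
    using assms(2) by (simp add: field_simps)
qed

lemma norm_diff_sgn01_scaleR_squared_le:
  fixes u p :: "'a::real_inner"
  assumes "norm u = 1" "norm p = 1"
  shows "(norm (u - sgn01 (inner u p) *\<^sub>R p))\<^sup>2 \<le> 2 * (1 - (inner u p)\<^sup>2)"
proof -
  define c where "c = inner u p"
  have "\<bar>c\<bar> \<le> 1"
    using Cauchy_Schwarz_ineq2[of u p] assms by (simp add: c_def)
  then have "c\<^sup>2 \<le> \<bar>c\<bar>"
    using mult_right_mono[of "\<bar>c\<bar>" 1 "\<bar>c\<bar>"] by (simp add: power2_eq_square abs_mult_self_eq)
  have "(norm (u - t *\<^sub>R p))\<^sup>2 = (norm u)\<^sup>2 - 2 * (t * c) + t\<^sup>2 * (norm p)\<^sup>2" for t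
    unfolding power2_norm_eq_inner
    by (simp add: inner_diff_left inner_diff_right inner_commute[of p u] c_def power2_eq_square algebra_simps)
  then have "(norm (u - sgn01 c *\<^sub>R p))\<^sup>2 = 2 - 2 * \<bar>c\<bar>"
    using assms by (simp add: sgn01_def)
  with \<open>c\<^sup>2 \<le> \<bar>c\<bar>\<close> show ?thesis
    by (simp add: c_def)
qed

locale svd_perturbation =
  R: svd_series R p q s + T: svd_sum T u v \<sigma> n
  for R T :: "'a::real_inner \<Rightarrow> 'a" and p q u v :: "nat \<Rightarrow> 'a" and s \<sigma> :: "nat \<Rightarrow> real" and n :: nat +
  fixes e :: real
  assumes s_sq_decreasing: "\<And>i. i \<ge> 1 \<Longrightarrow> (s (Suc i))\<^sup>2 \<le> (s i)\<^sup>2"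
    and \<sigma>_decreasing: "\<And>l. 1 \<le> l \<Longrightarrow> l < n \<Longrightarrow> \<bar>\<sigma> (Suc l)\<bar> \<le> \<bar>\<sigma> l\<bar>"
    and s_le_1: "\<And>i. i \<ge> 1 \<Longrightarrow> \<bar>s i\<bar> \<le> 1"
    and \<sigma>_le_1: "\<And>l. l \<in> {1..n} \<Longrightarrow> \<bar>\<sigma> l\<bar> \<le> 1"
    and image_diff_le: "\<And>x. norm (R x - T x) \<le> e * norm x"
begin

lemma s_sq_antimono:
  assumes "1 \<le> i" "i \<le> k"
  shows "(s k)\<^sup>2 \<le> (s i)\<^sup>2"
  using assms(2)
proof (induction k rule: dec_induct)
  case (step m)
  then show ?case
    using s_sq_decreasing[of m] assms(1) by linarith
qed simp

lemma \<sigma>_sq_antimono: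
  assumes "1 \<le> i" "i \<le> k" "k \<le> n"
  shows "(\<sigma> k)\<^sup>2 \<le> (\<sigma> i)\<^sup>2"
proof -
  have "\<bar>\<sigma> k\<bar> \<le> \<bar>\<sigma> i\<bar>"
    using assms(2,3)
  proof (induction k rule: dec_induct)
    case (step m)
    then show ?case
      using \<sigma>_decreasing[of m] assms(1) by linarith
  qed simp
  then show ?thesis
    by (simp add: abs_le_square_iff)
qed

lemma e_nonneg:
  assumes "n \<ge> 1"
  shows "0 \<le> e"
  using order.trans[OF norm_ge_zero image_diff_le[of "u 1"]] T.norm_vector[of 1] assms by simp

lemma inner_images_close: "\<bar>inner (R x) (R y) - inner (T x) (T y)\<bar> \<le> 2 * e * norm x * norm y"
  by (rule inner_images_diff_le[OF image_diff_le R.norm_image_le[OF s_le_1] T.norm_image_le[OF \<sigma>_le_1]])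

lemma inner_image_vector_close:
  assumes "j \<in> {1..n}"
  shows "\<bar>inner (R (u j)) (R y) - (\<sigma> j)\<^sup>2 * inner (u j) y\<bar> \<le> 2 * e * norm y"
  using inner_images_close[of "u j" y] T.inner_image_vector[OF assms] T.norm_vector[OF assms] by simp

lemma singular_value_sq_lower:
  assumes j: "j \<in> {1..n}"
  shows "(s j)\<^sup>2 - 2 * e \<le> (\<sigma> j)\<^sup>2"
proof -
  obtain d where unit: "(\<Sum>i\<in>{1..j}. (d i)\<^sup>2) = 1"
    and orth: "\<And>l. l \<in> {1..<j} \<Longrightarrow> inner (u l) (\<Sum>i\<in>{1..j}. d i *\<^sub>R p i) = 0"
    using exists_unit_combination_orthogonal[of "{1..<j}" "{1..j}"] j by auto
  define h where "h = (\<Sum>i\<in>{1..j}. d i *\<^sub>R p i)"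
  have norm_h: "(norm h)\<^sup>2 = 1"
    using norm_orthonormal_combination[OF R.p_orthonormal, of "{1..j}" d] unit by (simp add: h_def)
  have "(s j)\<^sup>2 * (norm h)\<^sup>2 \<le> (norm (R h))\<^sup>2"
    using s_sq_antimono by (intro R.norm_image_squared_ge[of "{1..j}" h d]) (auto simp: h_def)
  moreover have "(norm (T h))\<^sup>2 \<le> (\<sigma> j)\<^sup>2 * (norm h)\<^sup>2"
  proof (rule T.norm_image_squared_le)
    fix l assume "l \<in> {1..n}" "inner (u l) h \<noteq> 0"
    then have "j \<le> l" "l \<le> n"
      using orth[of l] by (force simp: h_def)+
    then show "(\<sigma> l)\<^sup>2 \<le> (\<sigma> j)\<^sup>2"
      using \<sigma>_sq_antimono j by simp
  qed simp
  moreover have "(norm (R h))\<^sup>2 - (norm (T h))\<^sup>2 \<le> 2 * e"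
    using inner_images_close[of h h] norm_h
    by (simp add: power2_norm_eq_inner mult.assoc flip: power2_eq_square)
  ultimately show ?thesis
    using norm_h by simp
qed

lemma singular_value_sq_upper:
  assumes j: "j \<in> {1..n}"
  shows "(\<sigma> j)\<^sup>2 \<le> (s j)\<^sup>2 + 2 * e"
proof -
  obtain d where unit: "(\<Sum>i\<in>{1..j}. (d i)\<^sup>2) = 1"
    and orth: "\<And>l. l \<in> {1..<j} \<Longrightarrow> inner (p l) (\<Sum>i\<in>{1..j}. d i *\<^sub>R u i) = 0"
    using exists_unit_combination_orthogonal[of "{1..<j}" "{1..j}"] j by auto
  define h where "h = (\<Sum>i\<in>{1..j}. d i *\<^sub>R u i)"
  have sub: "{1..j} \<subseteq> {1..n}"
    using j by auto
  have norm_h: "(norm h)\<^sup>2 = 1"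
    using norm_orthonormal_combination[OF T.u_orthonormal _ sub, of d] unit by (simp add: h_def)
  have "(\<sigma> j)\<^sup>2 * (norm h)\<^sup>2 \<le> (norm (T h))\<^sup>2"
    using \<sigma>_sq_antimono j by (intro T.norm_image_squared_ge[OF sub, of h d]) (auto simp: h_def)
  moreover have "(norm (R h))\<^sup>2 \<le> (s j)\<^sup>2 * (norm h)\<^sup>2"
  proof (rule R.norm_image_squared_le)
    fix i :: nat assume "i \<ge> 1" "inner (p i) h \<noteq> 0"
    then have "j \<le> i"
      using orth[of i] by (force simp: h_def)
    then show "(s i)\<^sup>2 \<le> (s j)\<^sup>2"
      using s_sq_antimono j by simp
  qed simp
  moreover have "(norm (T h))\<^sup>2 - (norm (R h))\<^sup>2 \<le> 2 * e"
    using inner_images_close[of h h] norm_h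
    by (simp add: power2_norm_eq_inner mult.assoc flip: power2_eq_square)
  ultimately show ?thesis
    using norm_h by simp
qed

end

context svd_perturbation
begin

lemma norm_lower_projection_le:
  assumes j: "j \<in> {1..n}" and gap: "j \<ge> 2 \<Longrightarrow> g \<le> (s (j - 1))\<^sup>2 - (s j)\<^sup>2" and small: "2 * e < g"
  shows "norm (\<Sum>k\<in>{1..<j}. inner (p k) (u j) *\<^sub>R p k) \<le> 2 * e / (g - 2 * e)"
proof -
  define P where "P = (\<Sum>k\<in>{1..<j}. inner (p k) (u j) *\<^sub>R p k)"
  have "(g - 2 * e) * (norm P)\<^sup>2 \<le> 2 * e * norm P"
  proof (cases "j \<ge> 2")
    case False
    then have "P = 0"
      using j by (simp add: P_def)
    then show ?thesis
      by simp
  next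
    case True
    have sub: "{1..<j} \<subseteq> {1..}"
      by auto
    have coefficient: "inner (p i) P = (if i \<in> {1..<j} then inner (p i) (u j) else 0)" if "i \<ge> 1" for i
      using inner_orthonormal_combination[OF R.p_orthonormal _ sub, of i] that by (simp add: P_def)
    have "inner (R (u j)) (R P) = (norm (R P))\<^sup>2"
      unfolding power2_norm_eq_inner by (rule R.inner_image_eq_of_coefficients) (simp add: coefficient)
    moreover have "inner (u j) P = (norm P)\<^sup>2"
      using norm_orthonormal_combination[OF R.p_orthonormal _ sub, of "\<lambda>k. inner (p k) (u j)"]
      by (simp add: P_def inner_sum_right inner_commute power2_eq_square)
    moreover have "(s (j - 1))\<^sup>2 * (norm P)\<^sup>2 \<le> (norm (R P))\<^sup>2"
      using s_sq_antimono
      by (intro R.norm_image_squared_ge[OF _ sub P_def, of "(s (j - 1))\<^sup>2"]) auto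
    moreover have "(g - 2 * e) * (norm P)\<^sup>2 \<le> ((s (j - 1))\<^sup>2 - (\<sigma> j)\<^sup>2) * (norm P)\<^sup>2"
      using gap[OF True] singular_value_sq_upper[OF j] by (intro mult_right_mono) auto
    ultimately have "(g - 2 * e) * (norm P)\<^sup>2 \<le> inner (R (u j)) (R P) - (\<sigma> j)\<^sup>2 * inner (u j) P"
      by (simp add: left_diff_distrib)
    also have "\<dots> \<le> 2 * e * norm P"
      using inner_image_vector_close[OF j, of P] by (rule abs_le_D1)
    finally show ?thesis .
  qed
  then show ?thesis
    unfolding P_def[symmetric] using small e_nonneg j by (intro le_divide_of_mult_square_le) auto
qed

lemma norm_upper_residual_le:
  assumes j: "j \<in> {1..n}" and gap: "g \<le> (s j)\<^sup>2 - (s (Suc j))\<^sup>2" and small: "2 * e < g"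
  shows "norm (u j - (\<Sum>i\<in>{1..j}. inner (p i) (u j) *\<^sub>R p i)) \<le> 2 * e / (g - 2 * e)"
proof -
  define y where "y = u j - (\<Sum>i\<in>{1..j}. inner (p i) (u j) *\<^sub>R p i)"
  have sub: "{1..j} \<subseteq> {1..}"
    by auto
  have coefficient: "inner (p i) y = (if i \<in> {1..j} then 0 else inner (p i) (u j))" if "i \<ge> 1" for i
    using orthonormal_residual_orthogonal[OF R.p_orthonormal _ sub, of i "u j"]
      inner_orthonormal_combination[OF R.p_orthonormal _ sub, of i "\<lambda>i. inner (p i) (u j)"] that
    by (auto simp: y_def inner_diff_right)
  have "inner (R (u j)) (R y) = (norm (R y))\<^sup>2"
    unfolding power2_norm_eq_inner by (rule R.inner_image_eq_of_coefficients) (simp add: coefficient)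
  moreover have "inner (u j) y = (norm y)\<^sup>2"
  proof -
    have "u j - y = (\<Sum>i\<in>{1..j}. inner (p i) (u j) *\<^sub>R p i)"
      by (simp add: y_def)
    then have "inner (u j - y) y = (\<Sum>i\<in>{1..j}. inner (p i) (u j) * inner (p i) y)"
      by (simp add: inner_sum_left)
    also have "\<dots> = 0"
      by (intro sum.neutral) (simp add: coefficient)
    finally show ?thesis
      by (simp add: inner_diff_left power2_norm_eq_inner)
  qed
  moreover have "(norm (R y))\<^sup>2 \<le> (s (Suc j))\<^sup>2 * (norm y)\<^sup>2"
  proof (rule R.norm_image_squared_le)
    fix i :: nat
    assume "i \<ge> 1" "inner (p i) y \<noteq> 0"
    then have "Suc j \<le> i"
      using coefficient[of i] by (auto split: if_splits)
    then show "(s i)\<^sup>2 \<le> (s (Suc j))\<^sup>2"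
      using s_sq_antimono by simp
  qed simp
  moreover have "(g - 2 * e) * (norm y)\<^sup>2 \<le> ((\<sigma> j)\<^sup>2 - (s (Suc j))\<^sup>2) * (norm y)\<^sup>2"
    using gap singular_value_sq_lower[OF j] by (intro mult_right_mono) auto
  ultimately have "(g - 2 * e) * (norm y)\<^sup>2 \<le> (\<sigma> j)\<^sup>2 * inner (u j) y - inner (R (u j)) (R y)"
    by (simp add: left_diff_distrib)
  also have "\<dots> \<le> 2 * e * norm y"
    using abs_le_D2[OF inner_image_vector_close[OF j, of y]] by simp
  finally show ?thesis
    unfolding y_def[symmetric] using small e_nonneg j by (intro le_divide_of_mult_square_le) auto
qed

lemma right_singular_vector_close:
  assumes j: "j \<in> {1..n}" and gap_next: "g \<le> (s j)\<^sup>2 - (s (Suc j))\<^sup>2"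
    and gap_prev: "j \<ge> 2 \<Longrightarrow> g \<le> (s (j - 1))\<^sup>2 - (s j)\<^sup>2" and small: "2 * e < g"
  shows "norm (u j - sgn01 (inner (u j) (p j)) *\<^sub>R p j) \<le> 4 * e / (g - 2 * e)"
proof -
  define c where "c = inner (p j) (u j)"
  define P where "P = (\<Sum>k\<in>{1..<j}. inner (p k) (u j) *\<^sub>R p k)"
  define y where "y = u j - (\<Sum>i\<in>{1..j}. inner (p i) (u j) *\<^sub>R p i)"
  define b where "b = 2 * e / (g - 2 * e)"
  have "0 \<le> b"
    using small e_nonneg j by (simp add: b_def)
  have "norm P \<le> b" "norm y \<le> b"
    using norm_lower_projection_le[OF j gap_prev small] norm_upper_residual_le[OF j gap_next small]
    by (simp_all add: P_def y_def b_def)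
  have "1 = (\<Sum>i\<in>{1..j}. (inner (p i) (u j))\<^sup>2) + (norm y)\<^sup>2"
    using orthonormal_pythagoras[OF R.p_orthonormal, of "{1..j}" "u j"] T.norm_vector[OF j]
    by (simp add: y_def)
  also have "(\<Sum>i\<in>{1..j}. (inner (p i) (u j))\<^sup>2) = c\<^sup>2 + (norm P)\<^sup>2"
  proof -
    have "{1..j} = insert j {1..<j}"
      using j by auto
    then show ?thesis
      using norm_orthonormal_combination[OF R.p_orthonormal, of "{1..<j}" "\<lambda>k. inner (p k) (u j)"]
      by (simp add: c_def P_def subset_eq)
  qed
  finally have split: "1 - c\<^sup>2 = (norm P)\<^sup>2 + (norm y)\<^sup>2"
    by simp
  have "norm (p j) = 1"
    using orthonormal_onD[OF R.p_orthonormal, of j j] j by (simp add: norm_eq_sqrt_inner)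
  then have "(norm (u j - sgn01 (inner (u j) (p j)) *\<^sub>R p j))\<^sup>2 \<le> 2 * (1 - c\<^sup>2)"
    using norm_diff_sgn01_scaleR_squared_le[of "u j" "p j"] T.norm_vector[OF j]
    by (simp add: c_def inner_commute)
  also have "\<dots> \<le> 2 * (b\<^sup>2 + b\<^sup>2)"
    unfolding split using \<open>norm P \<le> b\<close> \<open>norm y \<le> b\<close>
    by (intro mult_left_mono add_mono power_mono) auto
  also have "\<dots> = (2 * b)\<^sup>2"
    by (simp add: power2_eq_square)
  finally have "norm (u j - sgn01 (inner (u j) (p j)) *\<^sub>R p j) \<le> 2 * b"
    by (rule power2_le_imp_le) (use \<open>0 \<le> b\<close> in simp)
  then show ?thesis
    by (simp add: b_def)
qed

end

lemma left_singular_vector_close: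
  fixes R T :: "'a::{real_inner,banach} \<Rightarrow> 'a"
  assumes "svd_perturbation R T p q u v s \<sigma> n e"
    and j: "j \<in> {1..n}" and gap_next: "g \<le> (s j)\<^sup>2 - (s (Suc j))\<^sup>2"
    and gap_prev: "j \<ge> 2 \<Longrightarrow> g \<le> (s (j - 1))\<^sup>2 - (s j)\<^sup>2" and small: "2 * e < g"
  shows "norm (v j - sgn01 (inner (v j) (q j)) *\<^sub>R q j) \<le> 4 * e / (g - 2 * e)"
proof -
  interpret svd_perturbation R T p q u v s \<sigma> n e
    by (rule assms(1))
  obtain R' where R': "svd_series R' q p s" "\<And>x y. inner (R' x) y = inner x (R y)"
    using svd_series_adjoint[OF R.svd_series_axioms s_le_1] by blast
  define T' where "T' x = (\<Sum>l=1..n. \<sigma> l *\<^sub>R tens (v l) (u l) x)" for x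
  have "svd_perturbation R' T' q p v u s \<sigma> n e"
  proof (intro svd_perturbation.intro svd_perturbation_axioms.intro R'(1))
    show "svd_sum T' v u \<sigma> n"
      unfolding T'_def[abs_def] by (rule T.adjoint)
    show "norm (R' x - T' x) \<le> e * norm x" for x
      unfolding T'_def by (rule adjoint_diff_le[OF R'(2) T.inner_adjoint image_diff_le])
  qed (use s_sq_decreasing \<sigma>_decreasing s_le_1 \<sigma>_le_1 in auto)
  then show ?thesis
    by (rule svd_perturbation.right_singular_vector_close[OF _ j gap_next gap_prev small])
qed

section \<open>Uniform convergence of the truncated singular vectors\<close>

lemma Lambda_gap_ge: "l \<in> {1..k} \<Longrightarrow> 1 / (lam l - lam (Suc l)) \<le> Lambda_gap lam k"
  unfolding Lambda_gap_def by (intro Max_ge) auto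

lemma gap_ge_inverse_Lambda_gap:
  fixes lam :: "nat \<Rightarrow> real"
  assumes "lam (Suc l) < lam l" and "l \<in> {1..k}"
  shows "0 < Lambda_gap lam k" "1 / Lambda_gap lam k \<le> lam l - lam (Suc l)"
proof -
  have "0 < 1 / (lam l - lam (Suc l))"
    using assms(1) by simp
  also have "\<dots> \<le> Lambda_gap lam k"
    by (rule Lambda_gap_ge[OF assms(2)])
  finally show "0 < Lambda_gap lam k" .
  then show "1 / Lambda_gap lam k \<le> lam l - lam (Suc l)"
    using Lambda_gap_ge[of l k lam] assms by (simp add: field_simps)
qed

lemma truncated_singular_vectors_close:
  fixes R T :: "'a::{real_inner,banach} \<Rightarrow> 'a" and s :: "nat \<Rightarrow> real" and k :: nat
  defines "\<Lambda> \<equiv> Lambda_gap (\<lambda>i. (s i)\<^sup>2) k"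
  assumes R: "svd_series R p q s" and T: "svd_sum T u v \<sigma> n"
    and s_gap: "\<And>i. i \<ge> 1 \<Longrightarrow> (s (Suc i))\<^sup>2 < (s i)\<^sup>2"
    and \<sigma>_decreasing: "\<And>l. 1 \<le> l \<Longrightarrow> l < n \<Longrightarrow> \<bar>\<sigma> (Suc l)\<bar> \<le> \<bar>\<sigma> l\<bar>"
    and s_le_1: "\<And>i. i \<ge> 1 \<Longrightarrow> \<bar>s i\<bar> \<le> 1" and \<sigma>_le_1: "\<And>l. l \<in> {1..n} \<Longrightarrow> \<bar>\<sigma> l\<bar> \<le> 1"
    and close: "\<And>x. norm (R x - T x) \<le> e * norm x"
    and k: "k \<le> n" and j: "j \<in> {1..k}"
    and small: "2 * e * \<Lambda> < 1"
  shows "norm (u j - sgn01 (inner (u j) (p j)) *\<^sub>R p j) \<le> 4 * e * \<Lambda> / (1 - 2 * e * \<Lambda>)"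
    and "norm (v j - sgn01 (inner (v j) (q j)) *\<^sub>R q j) \<le> 4 * e * \<Lambda> / (1 - 2 * e * \<Lambda>)"
proof -
  have perturbation: "svd_perturbation R T p q u v s \<sigma> n e"
    by (intro svd_perturbation.intro svd_perturbation_axioms.intro R T \<sigma>_decreasing s_le_1 \<sigma>_le_1 close
        less_imp_le[OF s_gap])
  have gap: "0 < \<Lambda>" "1 / \<Lambda> \<le> (s l)\<^sup>2 - (s (Suc l))\<^sup>2" if "l \<in> {1..k}" for l
    using gap_ge_inverse_Lambda_gap[of "\<lambda>i. (s i)\<^sup>2" l k] s_gap that by (simp_all add: \<Lambda>_def)
  have "0 < \<Lambda>"
    using gap(1) j by blast
  have jn: "j \<in> {1..n}"
    using j k by auto
  have gap_next: "1 / \<Lambda> \<le> (s j)\<^sup>2 - (s (Suc j))\<^sup>2"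
    using gap(2)[OF j] .
  have gap_prev: "1 / \<Lambda> \<le> (s (j - 1))\<^sup>2 - (s j)\<^sup>2" if "j \<ge> 2"
  proof -
    have "j - 1 \<in> {1..k}" "Suc (j - 1) = j"
      using j that by auto
    then show ?thesis
      using gap(2)[of "j - 1"] by simp
  qed
  have small': "2 * e < 1 / \<Lambda>"
    using small \<open>0 < \<Lambda>\<close> by (simp add: field_simps)
  have bound: "4 * e / (1 / \<Lambda> - 2 * e) = 4 * e * \<Lambda> / (1 - 2 * e * \<Lambda>)"
    using small \<open>0 < \<Lambda>\<close> by (simp add: field_simps)
  show "norm (u j - sgn01 (inner (u j) (p j)) *\<^sub>R p j) \<le> 4 * e * \<Lambda> / (1 - 2 * e * \<Lambda>)"
    using svd_perturbation.right_singular_vector_close[OF perturbation jn gap_next gap_prev small'] bound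
    by simp
  show "norm (v j - sgn01 (inner (v j) (q j)) *\<^sub>R q j) \<le> 4 * e * \<Lambda> / (1 - 2 * e * \<Lambda>)"
    using left_singular_vector_close[OF perturbation jn gap_next gap_prev small'] bound
    by simp
qed

lemma mult_tendsto_zero_of_bigo_smallo:
  fixes f g h :: "'b \<Rightarrow> real"
  assumes "f \<in> O[F](g)" "h \<in> o[F](\<lambda>x. 1 / g x)"
  shows "((\<lambda>x. f x * h x) \<longlongrightarrow> 0) F"
proof -
  have "(\<lambda>x. f x * h x) \<in> o[F](\<lambda>x. g x * (1 / g x))"
    by (rule landau_o.big_small_mult[OF assms])
  moreover have "(\<lambda>x. g x * (1 / g x)) \<in> O[F](\<lambda>_. 1)"
  proof (rule landau_o.bigI[where c=1])
    have "\<bar>g x * (1 / g x)\<bar> \<le> 1" for x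
      by (cases "g x = 0") simp_all
    then show "eventually (\<lambda>x. norm (g x * (1 / g x)) \<le> 1 * norm (1::real)) F"
      by simp
  qed simp
  ultimately have "(\<lambda>x. f x * h x) \<in> o[F](\<lambda>_. 1)"
    by (rule landau_o.small_big_trans)
  then show ?thesis
    using smalloD_tendsto by fastforce
qed

lemma Max_image_tendsto_zero:
  fixes f :: "'b \<Rightarrow> 'c \<Rightarrow> real"
  assumes "eventually (\<lambda>x. finite (A x) \<and> A x \<noteq> {} \<and> (\<forall>j\<in>A x. 0 \<le> f x j \<and> f x j \<le> b x)) F"
    and "(b \<longlongrightarrow> 0) F"
  shows "((\<lambda>x. Max (f x ` A x)) \<longlongrightarrow> 0) F"
proof (rule tendsto_sandwich[OF _ _ tendsto_const assms(2)])
  show "eventually (\<lambda>x. 0 \<le> Max (f x ` A x)) F"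
    using assms(1) by eventually_elim (auto simp: Max_ge_iff)
  show "eventually (\<lambda>x. Max (f x ` A x) \<le> b x) F"
    using assms(1) by eventually_elim (auto simp: Max_le_iff)
qed

lemma truncated_singular_vectors_tendsto:
  fixes \<rho> :: "'a::{real_inner,banach} \<Rightarrow> 'a" and T :: "nat \<Rightarrow> 'a \<Rightarrow> 'a"
  assumes \<rho>: "svd_series \<rho> p q s" "bounded_linear \<rho>"
    and s_gap: "\<And>i. i \<ge> 1 \<Longrightarrow> (s (Suc i))\<^sup>2 < (s i)\<^sup>2"
    and s_le_1: "\<And>i. i \<ge> 1 \<Longrightarrow> \<bar>s i\<bar> \<le> 1"
    and T: "\<And>n. svd_sum (T n) (u n) (v n) (\<sigma> n) n"
    and \<sigma>_decreasing: "\<And>n l. 1 \<le> l \<Longrightarrow> l < n \<Longrightarrow> \<bar>\<sigma> n (Suc l)\<bar> \<le> \<bar>\<sigma> n l\<bar>"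
    and \<sigma>_le_1: "\<And>n l. l \<in> {1..n} \<Longrightarrow> \<bar>\<sigma> n l\<bar> \<le> 1"
    and k: "filterlim k at_top sequentially" "eventually (\<lambda>n. k n \<le> n) sequentially"
    and rate: "(\<lambda>n. onorm (\<lambda>h. T n h - \<rho> h)) \<in> O(Mn)"
    and gap_rate: "(\<lambda>n. Lambda_gap (\<lambda>i. (s i)\<^sup>2) (k n)) \<in> o(\<lambda>n. 1 / Mn n)"
  shows "(\<lambda>n. Max ((\<lambda>j. norm (u n j - sgn01 (inner (u n j) (p j)) *\<^sub>R p j)) ` {1..k n})) \<longlonglongrightarrow> 0"
    and "(\<lambda>n. Max ((\<lambda>j. norm (v n j - sgn01 (inner (v n j) (q j)) *\<^sub>R q j)) ` {1..k n})) \<longlonglongrightarrow> 0"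
proof -
  define e where "e n = onorm (\<lambda>h. T n h - \<rho> h)" for n
  define \<Lambda> where "\<Lambda> n = Lambda_gap (\<lambda>i. (s i)\<^sup>2) (k n)" for n
  define x where "x n = e n * \<Lambda> n" for n
  define b where "b n = 4 * x n / (1 - 2 * x n)" for n
  have close: "norm (\<rho> x - T n x) \<le> e n * norm x" for n x
    using onorm[OF bounded_linear_sub[OF svd_sum.bounded_linear_image[OF T] \<rho>(2)]]
    by (simp add: e_def norm_minus_commute)
  have "x \<longlonglongrightarrow> 0"
    using mult_tendsto_zero_of_bigo_smallo[OF rate gap_rate] unfolding x_def[abs_def] e_def \<Lambda>_def .
  then have "b \<longlonglongrightarrow> 4 * 0 / (1 - 2 * 0)"
    unfolding b_def by (intro tendsto_intros) simp_all
  then have "b \<longlonglongrightarrow> 0"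
    by simp
  have "eventually (\<lambda>n. x n < 1 / 2) sequentially"
    using \<open>x \<longlonglongrightarrow> 0\<close> by (rule order_tendstoD) simp
  moreover have "eventually (\<lambda>n. 1 \<le> k n) sequentially"
    using k(1) unfolding filterlim_at_top by blast
  ultimately have "eventually (\<lambda>n. {1..k n} \<noteq> {} \<and> (\<forall>j\<in>{1..k n}.
      norm (u n j - sgn01 (inner (u n j) (p j)) *\<^sub>R p j) \<le> b n \<and>
      norm (v n j - sgn01 (inner (v n j) (q j)) *\<^sub>R q j) \<le> b n)) sequentially"
    using k(2)
  proof eventually_elim
    case (elim n)
    then have "2 * e n * \<Lambda> n < 1"
      by (simp add: x_def)
    then show ?case
      using truncated_singular_vectors_close[OF \<rho>(1) T s_gap \<sigma>_decreasing s_le_1 \<sigma>_le_1 close elim(3)]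
        elim(2) by (simp add: b_def x_def \<Lambda>_def mult.assoc)
  qed
  then show "(\<lambda>n. Max ((\<lambda>j. norm (u n j - sgn01 (inner (u n j) (p j)) *\<^sub>R p j)) ` {1..k n})) \<longlonglongrightarrow> 0"
    and "(\<lambda>n. Max ((\<lambda>j. norm (v n j - sgn01 (inner (v n j) (q j)) *\<^sub>R q j)) ` {1..k n})) \<longlonglongrightarrow> 0"
    by (auto intro!: Max_image_tendsto_zero[OF _ \<open>b \<longlonglongrightarrow> 0\<close>] elim!: eventually_mono)
qed

lemma abs_le_1_of_SUP_add_le_1:
  fixes s :: "nat \<Rightarrow> real" and \<sigma> :: "nat \<Rightarrow> nat \<Rightarrow> real"
  assumes s_decreasing: "\<And>j. j \<ge> 1 \<Longrightarrow> \<bar>s (Suc j)\<bar> \<le> \<bar>s j\<bar>"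
    and sum: "\<And>n. n \<ge> 1 \<Longrightarrow> (SUP j\<in>{1..}. \<bar>s j\<bar>) + (SUP j\<in>{1..n}. \<bar>\<sigma> n j\<bar>) \<le> 1"
  shows "\<And>i. i \<ge> 1 \<Longrightarrow> \<bar>s i\<bar> \<le> 1" "\<And>n l. l \<in> {1..n} \<Longrightarrow> \<bar>\<sigma> n l\<bar> \<le> 1"
proof -
  have "\<bar>s i\<bar> \<le> \<bar>s 1\<bar>" if "1 \<le> i" for i
    using that
  proof (induction i rule: dec_induct)
    case (step m)
    then show ?case
      using s_decreasing[of m] by linarith
  qed simp
  then have bdd: "bdd_above ((\<lambda>j. \<bar>s j\<bar>) ` {1..})"
    by (intro bdd_aboveI[of _ "\<bar>s 1\<bar>"]) auto
  have s_SUP: "\<bar>s i\<bar> \<le> (SUP j\<in>{1..}. \<bar>s j\<bar>)" if "i \<ge> 1" for i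
    using that by (intro cSUP_upper[OF _ bdd]) auto
  have \<sigma>_SUP: "\<bar>\<sigma> n l\<bar> \<le> (SUP j\<in>{1..n}. \<bar>\<sigma> n j\<bar>)" if "l \<in> {1..n}" for n l
    by (rule cSUP_upper[OF that bdd_above_finite]) auto
  show "\<bar>s i\<bar> \<le> 1" if "i \<ge> 1" for i
    using s_SUP[OF that] \<sigma>_SUP[of 1 1] sum[of 1] by fastforce
  show "\<bar>\<sigma> n l\<bar> \<le> 1" if "l \<in> {1..n}" for n l
    using \<sigma>_SUP[OF that] s_SUP[of 1] sum[of n] that by fastforce
qed

theorem lemma2:
  fixes M :: "'w measure"
    and X eps :: "int \<Rightarrow> 'w \<Rightarrow> 'a::{real_inner, banach, second_countable_topology}"
    and \<rho> :: "'a \<Rightarrow> 'a"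
    and k :: "nat \<Rightarrow> nat"
    and \<beta> :: real
    and Mn :: "nat \<Rightarrow> real"
    and C :: "nat \<Rightarrow> real" and \<phi> :: "nat \<Rightarrow> 'a"
    and Cn :: "nat \<Rightarrow> nat \<Rightarrow> 'w \<Rightarrow> real" and \<phi>n :: "nat \<Rightarrow> nat \<Rightarrow> 'w \<Rightarrow> 'a"
    and \<rho>s :: "nat \<Rightarrow> real" and \<psi> \<psi>t :: "nat \<Rightarrow> 'a"
    and \<rho>h :: "nat \<Rightarrow> nat \<Rightarrow> 'w \<Rightarrow> real" and \<psi>n \<psi>tn :: "nat \<Rightarrow> nat \<Rightarrow> 'w \<Rightarrow> 'a"
    and M0 \<sigma>2 :: real
  assumes prob: "prob_space M"
  (* the ARH(1) model *)
    and rho_lin: "bounded_linear \<rho>"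
    and rho_pow: "\<exists>k0. \<forall>j\<ge>k0. onorm (\<rho> ^^ j) < 1"
    and X_meas: "\<And>n. X n \<in> borel_measurable M"
    and eps_meas: "\<And>n. eps n \<in> borel_measurable M"
    and ARH: "\<And>n \<omega>. \<omega> \<in> space M \<Longrightarrow> X n \<omega> = \<rho> (X (n - 1) \<omega>) + eps n \<omega>"
    (* strong white noise: i.i.d., zero mean, finite positive second moment *)
    and eps_indep: "prob_space.indep_vars M (\<lambda>_. borel) eps UNIV"
    and eps_ident: "\<And>n. distr M borel (eps n) = distr M borel (eps 0)"
    and eps_mean: "integral\<^sup>L M (eps 0) = 0"
    and eps_sq: "integrable M (\<lambda>\<omega>. (norm (eps 0 \<omega>))\<^sup>2)"
    and eps_var: "integral\<^sup>L M (\<lambda>\<omega>. (norm (eps 0 \<omega>))\<^sup>2) = \<sigma>2" "\<sigma>2 > 0"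
    (* noise uncorrelated with the past of the process *)
    and eps_uncorr: "\<And>m n f g. m < n \<Longrightarrow>
        integral\<^sup>L M (\<lambda>\<omega>. inner (X m \<omega>) f * inner (eps n \<omega>) g) = 0"
    (* X zero-mean and (strictly) stationary *)
    and X_mean: "\<And>n. integral\<^sup>L M (X n) = 0"
    and X_stat: "\<And>h. distr M (PiM UNIV (\<lambda>_::int. borel)) (\<lambda>\<omega> i. X (i + h) \<omega>)
                    = distr M (PiM UNIV (\<lambda>_::int. borel)) (\<lambda>\<omega> i. X i \<omega>)"
  (* spectral decomposition of C_X = E[X_0 \<otimes> X_0] *)
    and C_mono: "\<And>j. j \<ge> 1 \<Longrightarrow> C (Suc j) \<le> C j"
    and phi_on: "orthonormal_on {1..} \<phi>"
    and CX_spec: "\<And>f. (\<lambda>j. C (Suc j) *\<^sub>R tens (\<phi> (Suc j)) (\<phi> (Suc j)) f) sums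
                       op_expect M (\<lambda>\<omega>. tens (X 0 \<omega>) (X 0 \<omega>)) f"
    and C_gap: "\<And>j. j \<ge> 1 \<Longrightarrow> C (Suc j) < C j"
  (* eigen-decomposition of the empirical covariance C_n *)
    and Cn_mono: "\<And>n j \<omega>. \<omega> \<in> space M \<Longrightarrow> 1 \<le> j \<Longrightarrow> j < n \<Longrightarrow> Cn n (Suc j) \<omega> \<le> Cn n j \<omega>"
    and Cn_nonneg: "\<And>n j \<omega>. \<omega> \<in> space M \<Longrightarrow> 1 \<le> j \<Longrightarrow> j \<le> n \<Longrightarrow> 0 \<le> Cn n j \<omega>"
    and Cn_zero: "\<And>n j \<omega>. \<omega> \<in> space M \<Longrightarrow> n < j \<Longrightarrow> Cn n j \<omega> = 0"
    and phin_on: "\<And>n \<omega>. \<omega> \<in> space M \<Longrightarrow> orthonormal_on {1..n} (\<lambda>j. \<phi>n n j \<omega>)"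
    and Cn_spec: "\<And>n \<omega> f. \<omega> \<in> space M \<Longrightarrow>
        emp_C X n \<omega> f = (\<Sum>j=1..n. Cn n j \<omega> *\<^sub>R tens (\<phi>n n j \<omega>) (\<phi>n n j \<omega>) f)"
  (* SVD of \<rho> *)
    and rho_sv_mono: "\<And>j. j \<ge> 1 \<Longrightarrow> \<bar>\<rho>s (Suc j)\<bar> \<le> \<bar>\<rho>s j\<bar>"
    and psi_on: "orthonormal_on {1..} \<psi>"
    and psit_on: "orthonormal_on {1..} \<psi>t"
    and rho_svd: "\<And>x. (\<lambda>j. \<rho>s (Suc j) *\<^sub>R tens (\<psi> (Suc j)) (\<psi>t (Suc j)) x) sums \<rho> x"
    and rho_psi: "\<And>j. j \<ge> 1 \<Longrightarrow> \<rho> (\<psi> j) = \<rho>s j *\<^sub>R \<psi>t j"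
    and rho_gap: "\<And>j. j \<ge> 1 \<Longrightarrow> \<bar>\<rho>s (Suc j)\<bar>\<^sup>2 < \<bar>\<rho>s j\<bar>\<^sup>2"
  (* SVD of D_n C_n^{-1} *)
    and rhoh_mono: "\<And>n j \<omega>. \<omega> \<in> space M \<Longrightarrow> 1 \<le> j \<Longrightarrow> j < n \<Longrightarrow> \<bar>\<rho>h n (Suc j) \<omega>\<bar> \<le> \<bar>\<rho>h n j \<omega>\<bar>"
    and psin_on: "\<And>n \<omega>. \<omega> \<in> space M \<Longrightarrow> orthonormal_on {1..n} (\<lambda>j. \<psi>n n j \<omega>)"
    and psitn_on: "\<And>n \<omega>. \<omega> \<in> space M \<Longrightarrow> orthonormal_on {1..n} (\<lambda>j. \<psi>tn n j \<omega>)"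
    and DnCn_svd: "\<And>n \<omega> h. \<omega> \<in> space M \<Longrightarrow>
        emp_D X n \<omega> (emp_Cinv (\<lambda>j. Cn n j \<omega>) (\<lambda>j. \<phi>n n j \<omega>) n h)
          = (\<Sum>j=1..n. \<rho>h n j \<omega> *\<^sub>R tens (\<psi>n n j \<omega>) (\<psi>tn n j \<omega>) h)"
    and DnCn_psi: "\<And>n j \<omega>. \<omega> \<in> space M \<Longrightarrow> 1 \<le> j \<Longrightarrow> j \<le> n \<Longrightarrow>
        emp_D X n \<omega> (emp_Cinv (\<lambda>j. Cn n j \<omega>) (\<lambda>j. \<phi>n n j \<omega>) n (\<psi>n n j \<omega>))
          = \<rho>h n j \<omega> *\<^sub>R \<psi>tn n j \<omega>"
  (* truncation parameter *)
    and k_lim: "filterlim k at_top sequentially"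
    and k_lt: "\<And>n. n \<ge> 1 \<Longrightarrow> real (k n) / real n < 1"
    and beta: "\<beta> > 1/2"
    and k_rate: "(\<lambda>n. sqrt (real (k n)) * Lambda_gap C (k n))
                   \<in> o(\<lambda>n. real n powr (1/4) / (ln (real n)) powr \<beta>)"
  (* A1 *)
    and A1: "AE \<omega> in M. norm (X 0 \<omega>) < M0"
  (* A2 *)
    and A2: "AE \<omega> in M. \<forall>n. k n \<ge> 1 \<longrightarrow> Cn n (k n) \<omega> > 0"
  (* A3 *)
    and A3_C: "\<And>j. j \<ge> 1 \<Longrightarrow> C j > 0"
    and A3_D: "nuclear_op (op_expect M (\<lambda>\<omega>. tens (X 0 \<omega>) (X 1 \<omega>)))"
    and A3_rho: "compact_op \<rho>"
  (* A4 *)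
    and A4: "\<And>n \<omega>. \<omega> \<in> space M \<Longrightarrow> n \<ge> 1 \<Longrightarrow>
        (SUP j\<in>{1..}. \<bar>\<rho>s j\<bar>) + (SUP j\<in>{1..n}. \<bar>\<rho>h n j \<omega>\<bar>) \<le> 1"
  (* \<rho> is a trace operator *)
    and rho_trace: "nuclear_op \<rho>"
  (* rate M_n *)
    and Mn_rate: "AE \<omega> in M.
        (\<lambda>n. onorm (\<lambda>h. emp_D X n \<omega> (emp_Cinv (\<lambda>j. Cn n j \<omega>) (\<lambda>j. \<phi>n n j \<omega>) n h) - \<rho> h))
          \<in> O(Mn)"
    and LambdaRho_rate: "(\<lambda>n. Lambda_gap (\<lambda>j. \<bar>\<rho>s j\<bar>\<^sup>2) (k n)) \<in> o(\<lambda>n. 1 / Mn n)"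
  shows "(AE \<omega> in M.
           (\<lambda>n. Max ((\<lambda>j. norm (\<psi>n n j \<omega> - sgn01 (inner (\<psi>n n j \<omega>) (\<psi> j)) *\<^sub>R \<psi> j)) ` {1..k n}))
             \<longlonglongrightarrow> 0) \<and>
         (AE \<omega> in M.
           (\<lambda>n. Max ((\<lambda>j. norm (\<psi>tn n j \<omega> - sgn01 (inner (\<psi>tn n j \<omega>) (\<psi>t j)) *\<^sub>R \<psi>t j)) ` {1..k n}))
             \<longlonglongrightarrow> 0)"
proof -
  let ?T = "\<lambda>n \<omega> h. emp_D X n \<omega> (emp_Cinv (\<lambda>j. Cn n j \<omega>) (\<lambda>j. \<phi>n n j \<omega>) n h)"
  have \<rho>: "svd_series \<rho> \<psi> \<psi>t \<rho>s"
    by (rule svd_series.intro[OF psi_on psit_on rho_svd])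
  have s_gap: "\<And>i. i \<ge> 1 \<Longrightarrow> (\<rho>s (Suc i))\<^sup>2 < (\<rho>s i)\<^sup>2"
    using rho_gap by simp
  have k_le: "eventually (\<lambda>n. k n \<le> n) sequentially"
    using eventually_ge_at_top[of 1] by eventually_elim (use k_lt in \<open>force simp: field_simps\<close>)
  have "AE \<omega> in M. \<omega> \<in> space M \<and> (\<lambda>n. onorm (\<lambda>h. ?T n \<omega> h - \<rho> h)) \<in> O(Mn)"
    using Mn_rate AE_space by eventually_elim auto
  then show ?thesis
    unfolding AE_conj_iff[symmetric]
  proof eventually_elim
    case (elim \<omega>)
    then have \<omega>: "\<omega> \<in> space M"
      by simp
    note A4_bounds = abs_le_1_of_SUP_add_le_1[OF rho_sv_mono A4[OF \<omega>]]
    have T: "svd_sum (?T n \<omega>) (\<lambda>j. \<psi>n n j \<omega>) (\<lambda>j. \<psi>tn n j \<omega>) (\<lambda>j. \<rho>h n j \<omega>) n" for n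
      by (rule svd_sum.intro[OF psin_on[OF \<omega>] psitn_on[OF \<omega>] DnCn_svd[OF \<omega>]])
    show ?case
      using truncated_singular_vectors_tendsto[OF \<rho> rho_lin s_gap A4_bounds(1) T rhoh_mono[OF \<omega>]
          A4_bounds(2) k_lim k_le conjunct2[OF elim]] LambdaRho_rate
      by (simp add: power2_abs)
  qed
qed

end
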